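(* There is an absolute constant $C$ such that the following holds. Let $0<\epsilon\le1$, let $X\subset\mathbb{R}^2$ be a finite set of points with pairwise distinct $x$-coordinates, and let $A\subseteq X$ be an $\epsilon$-approximation for $X$ with respect to the ranges given by parallelograms (intersections of two closed slabs, each slab being the region between two parallel lines), with $|A|\ge\max(2,1/\epsilon)$. Then for every real slope $s$, $|\rho_X(s)-\rho_A(s)|\le C\epsilon^{1/3}$.
   Context: For a finite set $Y\subset\mathbb{R}^2$ with $|Y|\ge2$ and pairwise distinct $x$-coordinates, and a real number $s$, $\rho_Y(s)$ denotes the number of unordered pairs $\{a,b\}\subseteq Y$, $a\ne b$, such that the line through $a$ and $b$ has slope less than $s$, divided by $\binom{|Y|}{2}$ (the normalized position of $s$ in the sorted sequence of pairwise slopes). For a finite set $X$ and a family $\mathcal{R}$ of subsets of the plane, $A\subseteq X$ is an $\epsilon$-approximation for $X$ with respect to $\mathcal{R}$ if $\left|\frac{|A\cap R|}{|A|}-\frac{|X\cap R|}{|X|}\right|\le\epsilon$ for every $R\in\mathcal{R}$. *)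

theory Defs
  imports Complex_Main
begin

type_synonym pt = "real \<times> real"

definition slope :: "pt \<Rightarrow> pt \<Rightarrow> real" where
  "slope a b = (snd b - snd a) / (fst b - fst a)"

definition distinct_x :: "pt set \<Rightarrow> bool" where
  "distinct_x Y \<longleftrightarrow> (\<forall>a\<in>Y. \<forall>b\<in>Y. a \<noteq> b \<longrightarrow> fst a \<noteq> fst b)"

definition rho :: "pt set \<Rightarrow> real \<Rightarrow> real" where
  "rho Y s = real (card {{a, b} | a b. a \<in> Y \<and> b \<in> Y \<and> a \<noteq> b \<and> slope a b < s})
              / real (card Y choose 2)"

definition slab :: "real \<Rightarrow> real \<Rightarrow> real \<Rightarrow> real \<Rightarrow> pt set" where
  "slab u1 u2 c1 c2 = {p. c1 \<le> u1 * fst p + u2 * snd p \<and> u1 * fst p + u2 * snd p \<le> c2}"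

definition parallelograms :: "pt set set" where
  "parallelograms = {slab u1 u2 c1 c2 \<inter> slab v1 v2 d1 d2 | u1 u2 c1 c2 v1 v2 d1 d2.
      (u1, u2) \<noteq> (0, 0) \<and> (v1, v2) \<noteq> (0, 0)}"

definition eps_approx :: "pt set \<Rightarrow> pt set \<Rightarrow> pt set set \<Rightarrow> real \<Rightarrow> bool" where
  "eps_approx A X R \<epsilon> \<longleftrightarrow> A \<subseteq> X \<and>
     (\<forall>r\<in>R. \<bar>real (card (A \<inter> r)) / real (card A) - real (card (X \<inter> r)) / real (card X)\<bar> \<le> \<epsilon>)"

end

theory Submission
  imports Defs
begin

text \<open>
  For fixed a, the points b to the right of a with slope a b < s form an open wedge, and on a
  finite set an open wedge cuts out the same points as a parallelogram (closed slabs can be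
  shrunk past the finitely many values of the two linear forms); likewise for fixed b. Hence the
  \<epsilon>-approximation controls the relative count of such pairs in every row a \<in> A and every column
  b \<in> X, and comparing both the count in A \<times> A and the count in X \<times> X with the mixed count in
  A \<times> X shows that the densities of these ordered pairs in A and in X differ by at most 2\<epsilon>.
  Normalising by k choose 2 instead of k^2/2 costs O(1/k) = O(\<epsilon>) as |A| \<ge> 1/\<epsilon>, so the bound
  is even linear in \<epsilon>.
\<close>

definition slope_less :: "real \<Rightarrow> pt \<Rightarrow> pt \<Rightarrow> bool" where
  "slope_less s a b \<longleftrightarrow> fst a < fst b \<and> slope a b < s"

lemma slope_less_iff_below_line:
  "slope_less s a b \<longleftrightarrow> fst a < fst b \<and> snd b - s * fst b < snd a - s * fst a"
proof (cases "fst a < fst b")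
  case True
  then have "slope a b < s \<longleftrightarrow> snd b - snd a < s * (fst b - fst a)"
    unfolding slope_def by (simp add: divide_less_eq)
  then show ?thesis unfolding slope_less_def by (auto simp: algebra_simps)
qed (simp add: slope_less_def)

lemma slope_commute: "slope a b = slope b a"
  unfolding slope_def by (metis minus_diff_eq minus_divide_divide)

lemma finite_inter_greaterThan_eq_atLeastAtMost:
  fixes S :: "'a::{linorder, no_top} set"
  assumes "finite S"
  obtains c d where "S \<inter> {\<alpha><..} = S \<inter> {c..d}"
proof (cases "S \<inter> {\<alpha><..} = {}")
  case True
  obtain c where "Max (insert \<alpha> S) < c" using gt_ex by blast
  then have "S \<inter> {c..c} = {}" using assms by (auto dest: not_le_imp_less intro: Max_ge)
  then show ?thesis using True that by blast
next
  case False
  define c where "c = Min (S \<inter> {\<alpha><..})"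
  have "c \<in> S \<inter> {\<alpha><..}" unfolding c_def using assms False by (intro Min_in) auto
  then have "S \<inter> {\<alpha><..} = S \<inter> {c..Max S}" unfolding c_def using assms by auto
  then show ?thesis using that by blast
qed

lemma finite_inter_open_halfplane_eq_slab:
  assumes "finite X"
  obtains c d where "X \<inter> {p. \<alpha> < u1 * fst p + u2 * snd p} = X \<inter> slab u1 u2 c d"
proof -
  let ?f = "\<lambda>p::pt. u1 * fst p + u2 * snd p"
  obtain c d where cd: "?f ` X \<inter> {\<alpha><..} = ?f ` X \<inter> {c..d}"
    using finite_inter_greaterThan_eq_atLeastAtMost[OF finite_imageI[OF assms]] by blast
  have "\<alpha> < ?f p \<longleftrightarrow> c \<le> ?f p \<and> ?f p \<le> d" if "p \<in> X" for p
  proof -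
    have "?f p \<in> ?f ` X \<inter> {\<alpha><..} \<longleftrightarrow> ?f p \<in> ?f ` X \<inter> {c..d}"
      by (simp only: cd)
    then show ?thesis using that by simp
  qed
  then have "X \<inter> {p. \<alpha> < ?f p} = X \<inter> slab u1 u2 c d" unfolding slab_def by auto
  then show ?thesis using that by blast
qed

lemma finite_inter_open_wedge_eq_parallelogram:
  assumes "finite X" "(u1, u2) \<noteq> (0, 0)" "(v1, v2) \<noteq> (0, 0)"
  shows "\<exists>r\<in>parallelograms.
           {p\<in>X. \<alpha> < u1 * fst p + u2 * snd p \<and> \<beta> < v1 * fst p + v2 * snd p} = X \<inter> r"
proof -
  obtain c1 c2 where c: "X \<inter> {p. \<alpha> < u1 * fst p + u2 * snd p} = X \<inter> slab u1 u2 c1 c2"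
    using finite_inter_open_halfplane_eq_slab assms(1) by blast
  obtain d1 d2 where d: "X \<inter> {p. \<beta> < v1 * fst p + v2 * snd p} = X \<inter> slab v1 v2 d1 d2"
    using finite_inter_open_halfplane_eq_slab assms(1) by blast
  have "slab u1 u2 c1 c2 \<inter> slab v1 v2 d1 d2 \<in> parallelograms"
    unfolding parallelograms_def using assms(2,3) by blast
  moreover have "{p\<in>X. \<alpha> < u1 * fst p + u2 * snd p \<and> \<beta> < v1 * fst p + v2 * snd p}
                   = X \<inter> (slab u1 u2 c1 c2 \<inter> slab v1 v2 d1 d2)"
    using c d by blast
  ultimately show ?thesis by blast
qed

lemma slope_less_row_eq_parallelogram:
  assumes "finite X"
  shows "\<exists>r\<in>parallelograms. {b\<in>X. slope_less s a b} = X \<inter> r"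
  using finite_inter_open_wedge_eq_parallelogram[OF assms, of 1 0 s "-1" "fst a" "s * fst a - snd a"]
  by (simp add: slope_less_iff_below_line algebra_simps)

lemma slope_less_column_eq_parallelogram:
  assumes "finite X"
  shows "\<exists>r\<in>parallelograms. {a\<in>X. slope_less s a b} = X \<inter> r"
  using finite_inter_open_wedge_eq_parallelogram[OF assms, of "-1" 0 "-s" 1 "- fst b" "snd b - s * fst b"]
  by (simp add: slope_less_iff_below_line algebra_simps)

lemma eps_approx_Collect:
  assumes "eps_approx A X R \<epsilon>" "r \<in> R" "{x\<in>X. P x} = X \<inter> r"
  shows "\<bar>real (card {x\<in>A. P x}) / card A - real (card {x\<in>X. P x}) / card X\<bar> \<le> \<epsilon>"
proof -
  have "{x\<in>A. P x} = A \<inter> r" using assms(1,3) unfolding eps_approx_def by blast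
  then show ?thesis using assms unfolding eps_approx_def by auto
qed

lemma eps_approx_slope_less_row:
  assumes "finite X" "eps_approx A X parallelograms \<epsilon>"
  shows "\<bar>real (card {b\<in>A. slope_less s a b}) / card A
          - real (card {b\<in>X. slope_less s a b}) / card X\<bar> \<le> \<epsilon>"
proof -
  obtain r where "r \<in> parallelograms" "{b\<in>X. slope_less s a b} = X \<inter> r"
    using slope_less_row_eq_parallelogram[OF assms(1)] by blast
  then show ?thesis by (rule eps_approx_Collect[OF assms(2)])
qed

lemma eps_approx_slope_less_column:
  assumes "finite X" "eps_approx A X parallelograms \<epsilon>"
  shows "\<bar>real (card {a\<in>A. slope_less s a b}) / card A
          - real (card {a\<in>X. slope_less s a b}) / card X\<bar> \<le> \<epsilon>"
proof -
  obtain r where "r \<in> parallelograms" "{a\<in>X. slope_less s a b} = X \<inter> r"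
    using slope_less_column_eq_parallelogram[OF assms(1)] by blast
  then show ?thesis by (rule eps_approx_Collect[OF assms(2)])
qed

definition rel_count :: "('a \<Rightarrow> 'b \<Rightarrow> bool) \<Rightarrow> 'a set \<Rightarrow> 'b set \<Rightarrow> nat" where
  "rel_count R Y Z = card {(a, b) \<in> Y \<times> Z. R a b}"

lemma rel_count_eq_sum_rows:
  assumes "finite Y" "finite Z"
  shows "rel_count R Y Z = (\<Sum>a\<in>Y. card {b\<in>Z. R a b})"
proof -
  have "{(a, b) \<in> Y \<times> Z. R a b} = (SIGMA a:Y. {b\<in>Z. R a b})" by auto
  then show ?thesis unfolding rel_count_def using assms by simp
qed

lemma rel_count_eq_sum_columns:
  assumes "finite Y" "finite Z"
  shows "rel_count R Y Z = (\<Sum>b\<in>Z. card {a\<in>Y. R a b})"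
proof -
  have "rel_count R Y Z = rel_count (\<lambda>b a. R a b) Z Y"
    unfolding rel_count_def by (rule bij_betw_same_card[of prod.swap]) (auto simp: bij_betw_def)
  then show ?thesis using rel_count_eq_sum_rows assms by metis
qed

lemma rel_count_le:
  assumes "finite Y" "finite Z"
  shows "rel_count R Y Z \<le> card Y * card Z"
proof -
  have "rel_count R Y Z \<le> card (Y \<times> Z)"
    unfolding rel_count_def using assms by (intro card_mono) auto
  then show ?thesis by (simp add: card_cartesian_product)
qed

lemma abs_sum_diff_le:
  fixes f g :: "'a \<Rightarrow> real" and e :: real
  assumes "\<And>a. a \<in> Y \<Longrightarrow> \<bar>f a - g a\<bar> \<le> e"
  shows "\<bar>sum f Y - sum g Y\<bar> \<le> card Y * e"
proof -
  have "\<bar>sum f Y - sum g Y\<bar> \<le> (\<Sum>a\<in>Y. \<bar>f a - g a\<bar>)"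
    by (metis sum_abs sum_subtractf)
  also have "\<dots> \<le> card Y * e"
    using sum_bounded_above[of Y "\<lambda>a. \<bar>f a - g a\<bar>" e] assms by simp
  finally show ?thesis .
qed

lemma rel_count_density_approx:
  fixes R :: "'a \<Rightarrow> 'a \<Rightarrow> bool"
  assumes "finite X" "A \<subseteq> X" "A \<noteq> {}"
    and rows: "\<And>a. a \<in> A \<Longrightarrow>
      \<bar>real (card {b\<in>A. R a b}) / card A - real (card {b\<in>X. R a b}) / card X\<bar> \<le> \<epsilon>"
    and columns: "\<And>b. b \<in> X \<Longrightarrow>
      \<bar>real (card {a\<in>A. R a b}) / card A - real (card {a\<in>X. R a b}) / card X\<bar> \<le> \<epsilon>"
  shows "\<bar>real (rel_count R A A) / real (card A) ^ 2
          - real (rel_count R X X) / real (card X) ^ 2\<bar> \<le> 2 * \<epsilon>"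
proof -
  let ?m = "real (card A)" and ?n = "real (card X)"
  let ?AA = "real (rel_count R A A)" and ?AX = "real (rel_count R A X)"
    and ?XX = "real (rel_count R X X)"
  have "finite A" using assms(1,2) finite_subset by blast
  then have "0 < ?m" "?m \<le> ?n"
    using assms(3) card_mono[OF assms(1,2)] by (auto simp: card_gt_0_iff)
  have "?AA / ?m = (\<Sum>a\<in>A. real (card {b\<in>A. R a b}) / ?m)"
    "?AX / ?n = (\<Sum>a\<in>A. real (card {b\<in>X. R a b}) / ?n)"
    using \<open>finite A\<close> assms(1) by (simp_all add: rel_count_eq_sum_rows sum_divide_distrib)
  then have "\<bar>?AA / ?m - ?AX / ?n\<bar> \<le> ?m * \<epsilon>"
    using abs_sum_diff_le[OF rows] by simp
  moreover have "?AA / ?m\<^sup>2 - ?AX / (?m * ?n) = (?AA / ?m - ?AX / ?n) / ?m"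
    using \<open>0 < ?m\<close> \<open>?m \<le> ?n\<close> by (simp add: field_simps power2_eq_square)
  ultimately have AA_AX: "\<bar>?AA / ?m\<^sup>2 - ?AX / (?m * ?n)\<bar> \<le> \<epsilon>"
    using \<open>0 < ?m\<close> by (simp add: abs_divide divide_le_eq mult.commute)
  have "?AX / ?m = (\<Sum>b\<in>X. real (card {a\<in>A. R a b}) / ?m)"
    "?XX / ?n = (\<Sum>b\<in>X. real (card {a\<in>X. R a b}) / ?n)"
    using \<open>finite A\<close> assms(1) by (simp_all add: rel_count_eq_sum_columns sum_divide_distrib)
  then have "\<bar>?AX / ?m - ?XX / ?n\<bar> \<le> ?n * \<epsilon>"
    using abs_sum_diff_le[OF columns] by simp
  moreover have "?AX / (?m * ?n) - ?XX / ?n\<^sup>2 = (?AX / ?m - ?XX / ?n) / ?n"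
    using \<open>0 < ?m\<close> \<open>?m \<le> ?n\<close> by (simp add: field_simps power2_eq_square)
  ultimately have AX_XX: "\<bar>?AX / (?m * ?n) - ?XX / ?n\<^sup>2\<bar> \<le> \<epsilon>"
    using \<open>0 < ?m\<close> \<open>?m \<le> ?n\<close> by (simp add: abs_divide divide_le_eq mult.commute)
  from AA_AX AX_XX show ?thesis by linarith
qed

lemma real_choose_two: "real (k choose 2) = real k * (real k - 1) / 2"
proof -
  have "even (k * (k - 1))" by (cases "even k") auto
  then have "2 * (k choose 2) = k * (k - 1)" by (simp add: choose_two)
  then have "2 * real (k choose 2) = real k * real (k - 1)"
    by (metis of_nat_mult of_nat_numeral)
  then show ?thesis by (cases k) auto
qed

lemma rho_eq_rel_count:
  assumes "distinct_x Y"
  shows "rho Y s = 2 * real (rel_count (slope_less s) Y Y) / (card Y * (real (card Y) - 1))"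
proof -
  let ?P = "{(a, b) \<in> Y \<times> Y. slope_less s a b}"
  let ?U = "{{a, b} | a b. a \<in> Y \<and> b \<in> Y \<and> a \<noteq> b \<and> slope a b < s}"
  let ?edge = "\<lambda>(a, b). {a, b}"
  have U_sub: "?U \<subseteq> ?edge ` ?P"
  proof
    fix e assume "e \<in> ?U"
    then obtain a b where e: "e = {a, b}" "a \<in> Y" "b \<in> Y" "a \<noteq> b" "slope a b < s" by blast
    then have "fst a \<noteq> fst b" using assms unfolding distinct_x_def by blast
    then consider "slope_less s a b" | "slope_less s b a"
      using e(5) slope_commute[of a b] unfolding slope_less_def by linarith
    then show "e \<in> ?edge ` ?P"
    proof cases
      case 1
      then have "(a, b) \<in> ?P" using e by simp
      then show ?thesis using e(1) by force
    next
      case 2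
      then have "(b, a) \<in> ?P" using e by simp
      moreover have "e = ?edge (b, a)" using e(1) by auto
      ultimately show ?thesis by blast
    qed
  qed
  have sub_U: "?edge ` ?P \<subseteq> ?U"
  proof
    fix e assume "e \<in> ?edge ` ?P"
    then obtain a b where e: "e = {a, b}" "a \<in> Y" "b \<in> Y" "slope_less s a b" by auto
    then have "a \<noteq> b" "slope a b < s" unfolding slope_less_def by auto
    then show "e \<in> ?U" using e by blast
  qed
  have "inj_on ?edge ?P"
  proof (rule inj_onI)
    fix p q assume "p \<in> ?P" "q \<in> ?P" "?edge p = ?edge q"
    then show "p = q" unfolding slope_less_def by (auto simp: doubleton_eq_iff)
  qed
  then have "card ?U = card ?P"
    using subset_antisym[OF U_sub sub_U] by (simp add: card_image)
  then show ?thesis unfolding rho_def rel_count_def real_choose_two by simp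
qed

lemma rho_approx_pair_density:
  assumes "distinct_x Y" "2 \<le> card Y"
  shows "\<bar>rho Y s - 2 * real (rel_count (slope_less s) Y Y) / real (card Y) ^ 2\<bar> \<le> 4 / card Y"
proof -
  define k N where "k = real (card Y)" and "N = real (rel_count (slope_less s) Y Y)"
  have "finite Y" using assms(2) card.infinite by fastforce
  have k: "2 \<le> k" using assms(2) unfolding k_def by simp
  have "N \<le> k * k"
    unfolding k_def N_def using rel_count_le[OF \<open>finite Y\<close> \<open>finite Y\<close>] of_nat_mono
    by fastforce
  then have N: "0 \<le> N" "N \<le> k^2" unfolding N_def power2_eq_square by simp_all
  have "rho Y s - 2 * N / k^2 = (2 * N / k^2) / (k - 1)"
    using k unfolding rho_eq_rel_count[OF assms(1)] k_def N_def
    by (simp add: field_simps power2_eq_square)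
  moreover have "0 \<le> (2 * N / k^2) / (k - 1)" using k N by simp
  moreover have "(2 * N / k^2) / (k - 1) \<le> 2 / (k - 1)"
    using k N by (intro divide_right_mono) (auto simp: pos_divide_le_eq)
  moreover have "2 / (k - 1) \<le> 4 / k" using k by (simp add: field_simps)
  ultimately have "\<bar>rho Y s - 2 * N / k^2\<bar> \<le> 4 / k" unfolding abs_le_iff by linarith
  then show ?thesis unfolding k_def N_def .
qed

lemma rho_eps_approx_parallelograms:
  assumes "finite X" "distinct_x X" "eps_approx A X parallelograms \<epsilon>"
    and "0 < \<epsilon>" "1 / \<epsilon> \<le> card A" "2 \<le> card A"
  shows "\<bar>rho X s - rho A s\<bar> \<le> 12 * \<epsilon>"
proof -
  let ?density = "\<lambda>Y. real (rel_count (slope_less s) Y Y) / real (card Y) ^ 2"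
  have "A \<subseteq> X" using assms(3) unfolding eps_approx_def by blast
  have "A \<noteq> {}" using assms(6) by auto
  from \<open>A \<subseteq> X\<close> have "distinct_x A" using assms(2) unfolding distinct_x_def by blast
  have "card A \<le> card X" using card_mono[OF assms(1) \<open>A \<subseteq> X\<close>] .
  have "1 \<le> \<epsilon> * card A" using assms(4,5) by (simp add: field_simps)
  moreover have "\<epsilon> * card A \<le> \<epsilon> * card X"
    using assms(4) \<open>card A \<le> card X\<close> by simp
  ultimately have "4 / card A \<le> 4 * \<epsilon>" "4 / card X \<le> 4 * \<epsilon>"
    using assms(6) \<open>card A \<le> card X\<close> by (simp_all add: field_simps)
  moreover have "\<bar>rho A s - 2 * ?density A\<bar> \<le> 4 / card A"
    using rho_approx_pair_density[OF \<open>distinct_x A\<close> assms(6)] by simp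
  moreover have "\<bar>rho X s - 2 * ?density X\<bar> \<le> 4 / card X"
    using rho_approx_pair_density[OF assms(2)] assms(6) \<open>card A \<le> card X\<close> by simp
  moreover have "\<bar>?density A - ?density X\<bar> \<le> 2 * \<epsilon>"
    using rel_count_density_approx[OF assms(1) \<open>A \<subseteq> X\<close> \<open>A \<noteq> {}\<close>]
      eps_approx_slope_less_row[OF assms(1,3)] eps_approx_slope_less_column[OF assms(1,3)]
    by simp
  ultimately show ?thesis unfolding abs_le_iff by linarith
qed

theorem mainTheorem6:
  "\<exists>C::real. \<forall>(\<epsilon>::real) (X::pt set) (A::pt set) (s::real).
     0 < \<epsilon> \<and> \<epsilon> \<le> 1 \<and> finite X \<and> distinct_x X \<and>
     eps_approx A X parallelograms \<epsilon> \<and> real (card A) \<ge> max 2 (1 / \<epsilon>)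
     \<longrightarrow> \<bar>rho X s - rho A s\<bar> \<le> C * \<epsilon> powr (1/3)"
proof (intro exI[of _ 12] allI impI, elim conjE)
  fix \<epsilon> :: real and X A :: "pt set" and s :: real
  assume "0 < \<epsilon>" "\<epsilon> \<le> 1" "finite X" "distinct_x X" "eps_approx A X parallelograms \<epsilon>"
    and "real (card A) \<ge> max 2 (1 / \<epsilon>)"
  then have "\<bar>rho X s - rho A s\<bar> \<le> 12 * \<epsilon>"
    by (intro rho_eps_approx_parallelograms) auto
  moreover have "\<epsilon> \<le> \<epsilon> powr (1/3)"
    using powr_mono'[of "1/3" 1 \<epsilon>] \<open>0 < \<epsilon>\<close> \<open>\<epsilon> \<le> 1\<close> by simp
  ultimately show "\<bar>rho X s - rho A s\<bar> \<le> 12 * \<epsilon> powr (1/3)" by linarith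
qed

end
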